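(* Let $(X,\|\cdot\|)$ be a normed space and let $M\subset X$ be c-porous. Then $M$ is strongly lower porous, i.e. for every $x\in M$, $2\liminf_{r\to0^+}\frac{\gamma(x,r,M)}{r}=1$.
   Context: For $x\in X$, $r>0$, $B(x,r)=\{y\in X\colon\|x-y\|<r\}$. For $E\subset X$, $x\in X$, $R>0$, let $\gamma(x,R,E)=\sup\{r>0\colon \exists z\in X,\ B(z,r)\subset B(x,R)\setminus E\}$. The lower porosity of $E$ at $x$ is $2\liminf_{r\to0^+}\gamma(x,r,E)/r$; $E$ is strongly lower porous if its lower porosity equals $1$ at each point of $E$. A set $M\subset X$ is c-porous if for every $x\in X$ and every $r>0$ there exist $y\in B(x,r)$ and a non-zero continuous linear functional $\phi\colon X\to\mathbb R$ such that $\{z\in X\colon\phi(z)>\phi(y)\}\cap M=\emptyset$. *)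

theory Defs
  imports "HOL-Analysis.Analysis"
begin

definition porosity_gamma :: "'a::real_normed_vector \<Rightarrow> real \<Rightarrow> 'a set \<Rightarrow> real" where
  "porosity_gamma x R E = Sup {r. r > 0 \<and> (\<exists>z. ball z r \<subseteq> ball x R - E)}"

definition lower_porosity :: "'a::real_normed_vector set \<Rightarrow> 'a \<Rightarrow> ereal" where
  "lower_porosity E x = 2 * Liminf (at_right 0) (\<lambda>r. ereal (porosity_gamma x r E / r))"

definition strongly_lower_porous :: "'a::real_normed_vector set \<Rightarrow> bool" where
  "strongly_lower_porous E \<longleftrightarrow> (\<forall>x\<in>E. lower_porosity E x = 1)"

definition c_porous :: "'a::real_normed_vector set \<Rightarrow> bool" where
  "c_porous M \<longleftrightarrow> (\<forall>x. \<forall>r>0. \<exists>y\<in>ball x r. \<exists>\<phi>::'a \<Rightarrow> real.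
      bounded_linear \<phi> \<and> \<phi> \<noteq> (\<lambda>_. 0) \<and> {z. \<phi> z > \<phi> y} \<inter> M = {})"

end

theory Submission
  imports Defs
begin

text \<open>A ball in \<open>B(x,R) \ M\<close> misses the point \<open>x \<in> M\<close>, which forces its radius to be at most
  \<open>R/2\<close>. Conversely, c-porosity yields a point \<open>y\<close> arbitrarily close to \<open>x\<close> and an open half-space
  \<open>{\<phi> > \<phi> y}\<close> disjoint from \<open>M\<close>. Going from \<open>y\<close> a distance \<open>s\<close> along a nearly norming unit
  vector of \<open>\<phi>\<close> reaches the centre of a ball of any radius \<open>t < s\<close> inside that half-space; with
  \<open>t < s < R/2\<close> and \<open>y\<close> close enough to \<open>x\<close>, this ball also lies in \<open>B(x,R)\<close>. Hence
  \<open>\<gamma>(x,R,M) = R/2\<close> for every \<open>R > 0\<close>, and the lower porosity is \<open>2 \<cdot> 1/2 = 1\<close>.\<close>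

lemma ball_subset_ball_imp_dist_add_le:
  fixes x z :: "'a::real_normed_vector"
  assumes sub: "ball z r \<subseteq> ball x R" and "z \<noteq> x" and "0 < r"
  shows "dist z x + r \<le> R"
proof (rule dense_le)
  define e where "e = (z - x) /\<^sub>R norm (z - x)"
  have "norm e = 1"
    using \<open>z \<noteq> x\<close> by (simp add: e_def)
  have "z \<in> ball x R"
    using sub \<open>0 < r\<close> centre_in_ball by blast
  then have zx: "dist z x < R"
    by (simp add: dist_commute)
  fix y assume y: "y < dist z x + r"
  show "y \<le> R"
  proof (cases "y \<le> dist z x")
    case False
    define t where "t = y - dist z x"
    have t: "0 \<le> t" "t < r"
      using False y by (auto simp: t_def)
    have "z + t *\<^sub>R e \<in> ball z r"
      using t \<open>norm e = 1\<close> by (simp add: dist_norm)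
    with sub have "dist (z + t *\<^sub>R e) x < R"
      by (auto simp: dist_commute)
    moreover have "z + t *\<^sub>R e - x = (dist z x + t) *\<^sub>R e"
      using \<open>z \<noteq> x\<close> by (simp add: e_def dist_norm scaleR_add_left algebra_simps)
    then have "dist (z + t *\<^sub>R e) x = dist z x + t"
      using \<open>norm e = 1\<close> t by (simp add: dist_norm[of "z + t *\<^sub>R e"])
    ultimately show ?thesis
      by (simp add: t_def)
  qed (use zx in linarith)
qed

lemma radius_le_half_if_ball_avoids_point:
  fixes x z :: "'a::real_normed_vector"
  assumes "ball z r \<subseteq> ball x R - E" and "x \<in> E" and "0 < r"
  shows "2 * r \<le> R"
proof -
  have "x \<notin> ball z r"
    using assms(1,2) by blast
  then have "r \<le> dist z x"
    by simp
  then have "z \<noteq> x"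
    using \<open>0 < r\<close> by auto
  moreover have "ball z r \<subseteq> ball x R"
    using assms(1) by blast
  ultimately have "dist z x + r \<le> R"
    using ball_subset_ball_imp_dist_add_le \<open>0 < r\<close> by blast
  with \<open>r \<le> dist z x\<close> show ?thesis
    by simp
qed

lemma porosity_gamma_eq_half:
  fixes x :: "'a::real_normed_vector"
  assumes "x \<in> E" and "0 < R"
    and holes: "\<And>t. 0 < t \<Longrightarrow> t < R / 2 \<Longrightarrow> \<exists>z. ball z t \<subseteq> ball x R - E"
  shows "porosity_gamma x R E = R / 2"
proof -
  define S where "S = {r. r > 0 \<and> (\<exists>z. ball z r \<subseteq> ball x R - E)}"
  have upper: "r \<le> R / 2" if "r \<in> S" for r
  proof -
    obtain z where "ball z r \<subseteq> ball x R - E" and "0 < r"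
      using \<open>r \<in> S\<close> unfolding S_def by blast
    then have "2 * r \<le> R"
      by (rule radius_le_half_if_ball_avoids_point[OF _ \<open>x \<in> E\<close>])
    then show ?thesis
      by simp
  qed
  have lower: "t \<in> S" if "0 < t" and "t < R / 2" for t
    unfolding S_def using holes[OF that] \<open>0 < t\<close> by blast
  have "Sup S = R / 2"
  proof (rule antisym)
    have "R / 4 \<in> S"
      using \<open>0 < R\<close> by (intro lower) auto
    then have "S \<noteq> {}"
      by blast
    then show "Sup S \<le> R / 2"
      using upper by (rule cSup_least)
  next
    have "bdd_above S"
      using upper by (rule bdd_aboveI)
    show "R / 2 \<le> Sup S"
    proof (rule dense_le_bounded[of "R / 4"])
      show "R / 4 < R / 2"
        using \<open>0 < R\<close> by simp
    next
      fix t assume "R / 4 < t" and "t < R / 2"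
      then show "t \<le> Sup S"
        using cSup_upper[OF lower \<open>bdd_above S\<close>] \<open>0 < R\<close> by simp
    qed
  qed
  then show ?thesis
    by (simp add: porosity_gamma_def S_def)
qed

lemma onorm_less_imp_norming_vector:
  fixes \<phi> :: "'a::real_normed_vector \<Rightarrow> real"
  assumes "bounded_linear \<phi>" and "0 \<le> b" and "b < onorm \<phi>"
  obtains u where "norm u = 1" and "b < \<phi> u"
proof -
  interpret \<phi>: bounded_linear \<phi>
    by fact
  have "\<not> (\<forall>w. norm (\<phi> w) \<le> b * norm w)"
  proof
    assume "\<forall>w. norm (\<phi> w) \<le> b * norm w"
    then have "onorm \<phi> \<le> b"
      using onorm_bound[OF \<open>0 \<le> b\<close>, of \<phi>] by blast
    with \<open>b < onorm \<phi>\<close> show False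
      by simp
  qed
  then obtain w where w: "b * norm w < \<bar>\<phi> w\<bar>"
    by (auto simp: not_le)
  then have "w \<noteq> 0"
    using \<open>0 \<le> b\<close> by auto
  define v where "v = (if \<phi> w < 0 then - w else w)"
  have "\<phi> v = \<bar>\<phi> w\<bar>" and "norm v = norm w"
    by (auto simp: v_def \<phi>.neg)
  show ?thesis
  proof (rule that)
    show "norm (v /\<^sub>R norm w) = 1"
      using \<open>norm v = norm w\<close> \<open>w \<noteq> 0\<close> by simp
    have "b < \<bar>\<phi> w\<bar> / norm w"
      using w \<open>w \<noteq> 0\<close> by (simp add: pos_less_divide_eq)
    then show "b < \<phi> (v /\<^sub>R norm w)"
      using \<open>\<phi> v = \<bar>\<phi> w\<bar>\<close> by (simp add: \<phi>.scaleR divide_inverse mult.commute)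
  qed
qed

lemma ball_subset_open_halfspace:
  fixes \<phi> :: "'a::real_normed_vector \<Rightarrow> real"
  assumes "bounded_linear \<phi>" and "0 < onorm \<phi>" and "onorm \<phi> * t \<le> \<phi> c - \<phi> y"
  shows "ball c t \<subseteq> {w. \<phi> y < \<phi> w}"
proof
  fix w assume "w \<in> ball c t"
  then have "onorm \<phi> * norm (w - c) < onorm \<phi> * t"
    using \<open>0 < onorm \<phi>\<close> by (simp add: dist_norm norm_minus_commute)
  moreover have "\<phi> c - \<phi> w \<le> onorm \<phi> * norm (w - c)"
    using onorm[OF \<open>bounded_linear \<phi>\<close>, of "w - c"] \<open>bounded_linear \<phi>\<close>
    by (simp add: linear_simps)
  ultimately have "\<phi> y < \<phi> w"
    using assms(3) by linarith
  then show "w \<in> {w. \<phi> y < \<phi> w}"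
    by simp
qed

lemma open_halfspace_contains_ball:
  fixes \<phi> :: "'a::real_normed_vector \<Rightarrow> real"
  assumes "bounded_linear \<phi>" and "\<phi> \<noteq> (\<lambda>_. 0)" and "0 < t" and "t < s"
  obtains z where "dist y z = s" and "ball z t \<subseteq> {w. \<phi> y < \<phi> w}"
proof -
  interpret \<phi>: bounded_linear \<phi>
    by fact
  have "0 < onorm \<phi>"
    using \<open>\<phi> \<noteq> (\<lambda>_. 0)\<close> onorm_pos_lt[OF \<open>bounded_linear \<phi>\<close>] by auto
  then have "onorm \<phi> * t / s < onorm \<phi>"
    using \<open>0 < t\<close> \<open>t < s\<close> by (simp add: pos_divide_less_eq)
  moreover have "0 \<le> onorm \<phi> * t / s"
    using \<open>0 < onorm \<phi>\<close> \<open>0 < t\<close> \<open>t < s\<close> by simp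
  ultimately obtain u where "norm u = 1" and u: "onorm \<phi> * t / s < \<phi> u"
    using onorm_less_imp_norming_vector[OF \<open>bounded_linear \<phi>\<close>] by blast
  show ?thesis
  proof (rule that)
    show "dist y (y + s *\<^sub>R u) = s"
      using \<open>norm u = 1\<close> \<open>0 < t\<close> \<open>t < s\<close> by (simp add: dist_norm)
    have "onorm \<phi> * t = s * (onorm \<phi> * t / s)"
      using \<open>0 < t\<close> \<open>t < s\<close> by simp
    also have "\<dots> \<le> s * \<phi> u"
      using u \<open>0 < t\<close> \<open>t < s\<close> by (intro mult_left_mono) auto
    also have "\<dots> = \<phi> (y + s *\<^sub>R u) - \<phi> y"
      by (simp add: \<phi>.add \<phi>.scaleR)
    finally show "ball (y + s *\<^sub>R u) t \<subseteq> {w. \<phi> y < \<phi> w}"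
      by (rule ball_subset_open_halfspace[OF \<open>bounded_linear \<phi>\<close> \<open>0 < onorm \<phi>\<close>])
  qed
qed

lemma c_porous_imp_ball_in_complement:
  fixes x :: "'a::real_normed_vector"
  assumes "c_porous M" and "0 < t" and "t < R / 2"
  shows "\<exists>z. ball z t \<subseteq> ball x R - M"
proof -
  define s where "s = (R / 2 + t) / 2"
  have "t < s" and "0 < R / 2 - s"
    using assms(2,3) by (simp_all add: s_def field_simps)
  obtain y and \<phi> :: "'a \<Rightarrow> real"
    where "dist x y < R / 2 - s" and "bounded_linear \<phi>" and "\<phi> \<noteq> (\<lambda>_. 0)"
      and disjoint: "{w. \<phi> y < \<phi> w} \<inter> M = {}"
    using \<open>c_porous M\<close>[unfolded c_porous_def, rule_format, OF \<open>0 < R / 2 - s\<close>, of x]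
    by (auto simp: mem_ball)
  obtain z where "dist y z = s" and halfspace: "ball z t \<subseteq> {w. \<phi> y < \<phi> w}"
    using open_halfspace_contains_ball[OF \<open>bounded_linear \<phi>\<close> \<open>\<phi> \<noteq> (\<lambda>_. 0)\<close> \<open>0 < t\<close> \<open>t < s\<close>] .
  have "ball z t \<subseteq> ball x R"
  proof
    fix w assume "w \<in> ball z t"
    have "dist x w \<le> dist x y + dist y z + dist z w"
      using dist_triangle[of x w y] dist_triangle[of y w z] by linarith
    also have "\<dots> < (R / 2 - s) + s + t"
      using \<open>dist x y < R / 2 - s\<close> \<open>dist y z = s\<close> \<open>w \<in> ball z t\<close> by simp
    finally show "w \<in> ball x R"
      using \<open>t < R / 2\<close> by simp
  qed
  with halfspace disjoint show ?thesis
    by blast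
qed

theorem corollary2p3:
  fixes M :: "'a::real_normed_vector set"
  assumes "c_porous M"
  shows "strongly_lower_porous M"
  unfolding strongly_lower_porous_def
proof
  fix x assume "x \<in> M"
  have "porosity_gamma x r M = r / 2" if "0 < r" for r
    using porosity_gamma_eq_half[OF \<open>x \<in> M\<close> that]
      c_porous_imp_ball_in_complement[OF assms] by blast
  then have "\<forall>\<^sub>F r in at_right 0. ereal (porosity_gamma x r M / r) = ereal (1 / 2)"
    by (intro eventually_at_rightI[of 0 1]) auto
  then have "Liminf (at_right 0) (\<lambda>r. ereal (porosity_gamma x r M / r))
      = Liminf (at_right (0::real)) (\<lambda>_. ereal (1 / 2))"
    by (rule Liminf_eq)
  also have "\<dots> = ereal (1 / 2)"
    by (simp add: Liminf_const)
  finally have "Liminf (at_right 0) (\<lambda>r. ereal (porosity_gamma x r M / r)) = ereal (1 / 2)" .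
  then show "lower_porosity M x = 1"
    by (simp add: lower_porosity_def)
qed

end
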